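(* Let $I$, $\tilde I$, $h$, $h_A$ satisfy the compatibility assumption in the context, and let $\Rightarrow_t$, $\Rightarrow_e$ be as in the context with the witness set $W_{\tilde s'}$ taken to be the set of all temporal paths of $\tilde I$ from a state of $\tilde S_0$ to $\tilde s'$. Let $\tilde\pi=\tilde s_1\to\cdots\to\tilde s_n$ be a path in $\tilde I$ with temporal edges $\tilde s_k\xrightarrow{\tilde\alpha_{k+1}}\tilde s_{k+1}$ and/or epistemic edges $\tilde s_k\sim_a\tilde s_{k+1}$. Suppose there are concrete states $s_1,\dots,s_n$ with $h(s_k)=\tilde s_k$ for all $k$ such that for each temporal edge $\tau(\alpha_{k+1},s_k)=s_{k+1}$ for some $\alpha_{k+1}$ with $h_A(\alpha_{k+1})=\tilde\alpha_{k+1}$, and for each epistemic edge $l_a(s_k)=l_a(s_{k+1})$ and $s_{k+1}$ is reachable in $I$. If $s_1\in st_1\subseteq h^{-1}(\tilde s_1)$, then $(\tilde\pi,st_1)\Rightarrow^*(\tilde s_n,st_n)$ for some $st_n$ with $s_n\in st_n$; in particular $st_n\neq\emptyset$.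
   Context: $I$ and $\tilde I$ are interpreted systems over the same agents (global states $S,\tilde S$ with $l_a(s)$ the local state of agent $a$; initial states $S_0,\tilde S_0$; partial transition functions $\tau,\tilde\tau$); a state of $I$ is reachable if obtained from $S_0$ by finitely many transitions. $h:S\to\tilde S$ and $h_A:ACT\to\widetilde{ACT}$ are given functions satisfying the compatibility assumption: $h(S_0)\subseteq\tilde S_0$, and whenever $\tau(\alpha,s)$ is defined, $\tilde\tau(h_A(\alpha),h(s))=h(\tau(\alpha,s))$ (this holds for the variable-hiding abstraction of the paper). For $st\subseteq S$ let $L_a(st)=\{l_a(s)\mid s\in st\}$ and $\Theta_\alpha(st)=\{\tau(\alpha,s)\mid s\in st,\ \tau(\alpha,s)\text{ defined}\}$. Paths in $\tilde I$ are written with first edge followed by the rest: $e\,\|\,\pi$; a path of length zero is a state. Rule TemporalCheck: $(\tilde s\xrightarrow{\tilde\alpha}\tilde s'\,\|\,\pi,st)\Rightarrow_t(\pi,\bigcup_{\alpha\in h_A^{-1}(\tilde\alpha)}\Theta_\alpha(st)\cap h^{-1}(\tilde s'))$; $\Rightarrow_t^*$ is a finite sequence of such steps. Rule EpistemicCheck: given a set $W_{\tilde s'}$ of temporal paths $\pi'=\tilde s'_0\xrightarrow{\tilde\alpha'_1}\cdots\xrightarrow{\tilde\alpha'_m}\tilde s'$ with $\tilde s'_0\in\tilde S_0$, let $st'=\bigcup_{\pi'\in W_{\tilde s'}}\{X\mid(\pi',S_0\cap h^{-1}(\tilde s'_0))\Rightarrow_t^*(\tilde s',X)\}$; then $(\tilde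 s\sim_a\tilde s'\,\|\,\pi,st)\Rightarrow_e(\pi,\hat{st})$ with $\hat{st}=\{s\in st'\mid l_a(s)\in L_a(st)\}$. $\Rightarrow^*$ denotes a finite sequence of $\Rightarrow_t$ and $\Rightarrow_e$ steps. *)

theory Defs
  imports Main
begin

text \<open>An interpreted system is given by its initial states S0 (a set of global
states; the global state space is the whole type), a partial transition
function tau (None = undefined) and local-state functions l a.\<close>

inductive_set reachable :: "'s set \<Rightarrow> ('act \<Rightarrow> 's \<Rightarrow> 's option) \<Rightarrow> 's set"
  for S0 tau where
  init: "s \<in> S0 \<Longrightarrow> s \<in> reachable S0 tau"
| step: "s \<in> reachable S0 tau \<Longrightarrow> tau \<alpha> s = Some s' \<Longrightarrow> s' \<in> reachable S0 tau"

datatype ('aact, 'ag) elabel = Temp 'aact | Epi 'ag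

text \<open>A path is a first state followed by a list of (label, next state) edges.
A path of length zero is (s, []).\<close>
type_synonym ('t, 'aact, 'ag) apath = "'t \<times> (('aact, 'ag) elabel \<times> 't) list"

definition path_states :: "('t, 'aact, 'ag) apath \<Rightarrow> 't list" where
  "path_states p = fst p # map snd (snd p)"

fun valid_path :: "('aact \<Rightarrow> 't \<Rightarrow> 't option) \<Rightarrow> ('ag \<Rightarrow> 't \<Rightarrow> 'lt)
    \<Rightarrow> 't \<Rightarrow> (('aact, 'ag) elabel \<times> 't) list \<Rightarrow> bool" where
  "valid_path taut lt s [] = True"
| "valid_path taut lt s ((Temp a, s') # es) = (taut a s = Some s' \<and> valid_path taut lt s' es)"
| "valid_path taut lt s ((Epi ag, s') # es) = (lt ag s = lt ag s' \<and> valid_path taut lt s' es)"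

definition temporal_paths :: "'t set \<Rightarrow> ('aact \<Rightarrow> 't \<Rightarrow> 't option) \<Rightarrow> ('ag \<Rightarrow> 't \<Rightarrow> 'lt)
    \<Rightarrow> 't \<Rightarrow> ('t, 'aact, 'ag) apath set" where
  "temporal_paths S0t taut lt st' =
     {p. fst p \<in> S0t \<and> valid_path taut lt (fst p) (snd p)
         \<and> (\<forall>e \<in> set (snd p). \<exists>a. fst e = Temp a)
         \<and> last (path_states p) = st'}"

definition Theta :: "('act \<Rightarrow> 's \<Rightarrow> 's option) \<Rightarrow> 'act \<Rightarrow> 's set \<Rightarrow> 's set" where
  "Theta tau \<alpha> st = {s'. \<exists>s \<in> st. tau \<alpha> s = Some s'}"

definition Lset :: "('ag \<Rightarrow> 's \<Rightarrow> 'l) \<Rightarrow> 'ag \<Rightarrow> 's set \<Rightarrow> 'l set" where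
  "Lset l a st = l a ` st"

inductive tstep :: "('s \<Rightarrow> 't) \<Rightarrow> ('act \<Rightarrow> 'aact) \<Rightarrow> ('act \<Rightarrow> 's \<Rightarrow> 's option)
    \<Rightarrow> ('t, 'aact, 'ag) apath \<times> 's set \<Rightarrow> ('t, 'aact, 'ag) apath \<times> 's set \<Rightarrow> bool"
  for h hA tau where
  "tstep h hA tau ((st, (Temp a, st') # p), S)
      ((st', p), (\<Union>\<alpha> \<in> hA -` {a}. Theta tau \<alpha> S) \<inter> h -` {st'})"

abbreviation tstar where "tstar h hA tau \<equiv> (tstep h hA tau)\<^sup>*\<^sup>*"

text \<open>Rule EpistemicCheck, with witness set W = all temporal paths of the
abstract system from an abstract initial state to st'.\<close>
definition epi_target :: "'s set \<Rightarrow> ('s \<Rightarrow> 't) \<Rightarrow> ('act \<Rightarrow> 'aact) \<Rightarrow> ('act \<Rightarrow> 's \<Rightarrow> 's option)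
    \<Rightarrow> 't set \<Rightarrow> ('aact \<Rightarrow> 't \<Rightarrow> 't option) \<Rightarrow> ('ag \<Rightarrow> 't \<Rightarrow> 'lt) \<Rightarrow> 't \<Rightarrow> 's set" where
  "epi_target S0 h hA tau S0t taut lt st' =
     \<Union>{X. \<exists>p \<in> temporal_paths S0t taut lt st'.
            tstar h hA tau (p, S0 \<inter> h -` {fst p}) ((st', []), X)}"

inductive estep :: "'s set \<Rightarrow> ('s \<Rightarrow> 't) \<Rightarrow> ('act \<Rightarrow> 'aact) \<Rightarrow> ('act \<Rightarrow> 's \<Rightarrow> 's option)
    \<Rightarrow> ('ag \<Rightarrow> 's \<Rightarrow> 'l) \<Rightarrow> 't set \<Rightarrow> ('aact \<Rightarrow> 't \<Rightarrow> 't option) \<Rightarrow> ('ag \<Rightarrow> 't \<Rightarrow> 'lt)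
    \<Rightarrow> ('t, 'aact, 'ag) apath \<times> 's set \<Rightarrow> ('t, 'aact, 'ag) apath \<times> 's set \<Rightarrow> bool"
  for S0 h hA tau l S0t taut lt where
  "estep S0 h hA tau l S0t taut lt ((st, (Epi a, st') # p), S)
      ((st', p), {s \<in> epi_target S0 h hA tau S0t taut lt st'. l a s \<in> Lset l a S})"

definition cstep where
  "cstep S0 h hA tau l S0t taut lt x y \<longleftrightarrow>
     tstep h hA tau x y \<or> estep S0 h hA tau l S0t taut lt x y"

abbreviation cstar where
  "cstar S0 h hA tau l S0t taut lt \<equiv> (cstep S0 h hA tau l S0t taut lt)\<^sup>*\<^sup>*"

end

theory Submission
  imports Defs
begin

text \<open>By the compatibility assumption, a concrete run from S_0 to a reachable state s abstracts to a
temporal path of the abstract system from an abstract initial state, and the temporal check along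
that path keeps s; hence every reachable s lies in the epistemic target of h s. Consequently each
temporal or epistemic step along the abstract path keeps the next concrete witness s_{k+1} in the
current set, and s_n survives to the end.\<close>

lemma valid_path_snoc_Temp:
  "valid_path taut lt t (es @ [(Temp a, t')]) \<longleftrightarrow>
   valid_path taut lt t es \<and> taut a (last (path_states (t, es))) = Some t'"
proof (induction es arbitrary: t)
  case Nil
  then show ?case by (simp add: path_states_def)
next
  case (Cons e es)
  obtain lab u where "e = (lab, u)"
    by fastforce
  with Cons show ?case
    by (cases lab) (auto simp: path_states_def)
qed

lemma tstep_append:
  "tstep h hA tau ((t, p), S) ((t', p'), S') \<Longrightarrow> tstep h hA tau ((t, p @ r), S) ((t', p' @ r), S')"
  by (auto elim!: tstep.cases intro: tstep.intros)

lemma tstar_append: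
  assumes "tstar h hA tau ((t, p), S) ((t', p'), S')"
  shows "tstar h hA tau ((t, p @ r), S) ((t', p' @ r), S')"
  using assms
proof (induction "((t', p'), S')" arbitrary: t' p' S' rule: rtranclp_induct)
  case base
  then show ?case by simp
next
  case (step y)
  obtain u q U where y: "y = ((u, q), U)" by (metis prod.exhaust)
  have "tstar h hA tau ((t, p @ r), S) ((u, q @ r), U)"
    using step(3) y by simp
  moreover have "tstep h hA tau ((u, q @ r), U) ((t', p' @ r), S')"
    using step.hyps(2) y by (simp add: tstep_append)
  ultimately show ?case by simp
qed

lemma reachable_tracked_by_temporal_path:
  fixes lt :: "'ag \<Rightarrow> 't \<Rightarrow> 'lt"
  assumes "s \<in> reachable S0 tau"
    and compat_trans: "\<And>\<alpha> s s'. tau \<alpha> s = Some s' \<Longrightarrow> taut (hA \<alpha>) (h s) = Some (h s')"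
  shows "\<exists>p \<in> temporal_paths (h ` S0) taut lt (h s).
           \<exists>X. tstar h hA tau (p, S0 \<inter> h -` {fst p}) ((h s, []), X) \<and> s \<in> X"
  using assms(1)
proof (induction rule: reachable.induct)
  case (init s)
  show ?case
    by (rule bexI[of _ "(h s, [])"]) (auto simp: temporal_paths_def path_states_def init)
next
  case (step s \<alpha> s')
  then obtain t0 es X where
    p: "(t0, es) \<in> temporal_paths (h ` S0) taut lt (h s)"
    and run: "tstar h hA tau ((t0, es), S0 \<inter> h -` {t0}) ((h s, []), X)" and "s \<in> X"
    by auto
  define e where "e = (Temp (hA \<alpha>) :: (_, 'ag) elabel, h s')"
  have "(t0, es @ [e]) \<in> temporal_paths (h ` S0) taut lt (h s')"
    using p compat_trans[OF step.hyps(2)]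
    by (auto simp: temporal_paths_def e_def valid_path_snoc_Temp path_states_def)
  moreover have "tstar h hA tau ((t0, es @ [e]), S0 \<inter> h -` {t0}) ((h s, [e]), X)"
    using tstar_append[OF run, of "[e]"] by simp
  moreover have "tstep h hA tau ((h s, [e]), X)
      ((h s', []), (\<Union>\<beta> \<in> hA -` {hA \<alpha>}. Theta tau \<beta> X) \<inter> h -` {h s'})"
    unfolding e_def by (rule tstep.intros)
  moreover have "s' \<in> (\<Union>\<beta> \<in> hA -` {hA \<alpha>}. Theta tau \<beta> X) \<inter> h -` {h s'}"
    using \<open>s \<in> X\<close> step.hyps(2) by (auto simp: Theta_def)
  ultimately show ?case
    by (metis (no_types, lifting) fst_conv rtranclp.rtrancl_into_rtrancl)
qed

lemma temporal_paths_mono: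
  "S0t \<subseteq> S0t' \<Longrightarrow> temporal_paths S0t taut lt t \<subseteq> temporal_paths S0t' taut lt t"
  by (auto simp: temporal_paths_def)

lemma reachable_in_epi_target:
  assumes "s \<in> reachable S0 tau"
    and compat_init: "h ` S0 \<subseteq> S0t"
    and compat_trans: "\<And>\<alpha> s s'. tau \<alpha> s = Some s' \<Longrightarrow> taut (hA \<alpha>) (h s) = Some (h s')"
  shows "s \<in> epi_target S0 h hA tau S0t taut lt (h s)"
proof -
  obtain p X where "p \<in> temporal_paths S0t taut lt (h s)"
    and "tstar h hA tau (p, S0 \<inter> h -` {fst p}) ((h s, []), X)" and "s \<in> X"
    using reachable_tracked_by_temporal_path[where h=h and hA=hA and taut=taut and lt=lt,
        OF assms(1) compat_trans]
      temporal_paths_mono[OF compat_init]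
    by blast
  then show ?thesis unfolding epi_target_def by blast
qed

fun concrete_edge :: "'s set \<Rightarrow> ('act \<Rightarrow> 's \<Rightarrow> 's option) \<Rightarrow> ('act \<Rightarrow> 'aact) \<Rightarrow> ('ag \<Rightarrow> 's \<Rightarrow> 'l)
    \<Rightarrow> ('aact, 'ag) elabel \<Rightarrow> 's \<Rightarrow> 's \<Rightarrow> bool" where
  "concrete_edge S0 tau hA l (Temp a) s s' \<longleftrightarrow> (\<exists>\<alpha>. hA \<alpha> = a \<and> tau \<alpha> s = Some s')"
| "concrete_edge S0 tau hA l (Epi ag) s s' \<longleftrightarrow> l ag s = l ag s' \<and> s' \<in> reachable S0 tau"

inductive concrete_run :: "'s set \<Rightarrow> ('act \<Rightarrow> 's \<Rightarrow> 's option) \<Rightarrow> ('act \<Rightarrow> 'aact)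
    \<Rightarrow> ('ag \<Rightarrow> 's \<Rightarrow> 'l) \<Rightarrow> ('s \<Rightarrow> 't) \<Rightarrow> 's \<Rightarrow> (('aact, 'ag) elabel \<times> 't) list \<Rightarrow> 's list \<Rightarrow> bool"
  for S0 tau hA l h where
  Nil: "concrete_run S0 tau hA l h s [] []"
| Cons: "concrete_edge S0 tau hA l lab s s' \<Longrightarrow> h s' = t \<Longrightarrow> concrete_run S0 tau hA l h s' es ss
    \<Longrightarrow> concrete_run S0 tau hA l h s ((lab, t) # es) (s' # ss)"

lemma concrete_run_of_nth:
  assumes "length ss = length es"
    and "\<And>k. k < length es \<Longrightarrow> h (ss ! k) = snd (es ! k)"
    and "\<And>k. k < length es \<Longrightarrow> concrete_edge S0 tau hA l (fst (es ! k)) ((s # ss) ! k) (ss ! k)"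
  shows "concrete_run S0 tau hA l h s es ss"
  using assms
proof (induction es arbitrary: s ss)
  case Nil
  then show ?case by (simp add: concrete_run.Nil)
next
  case (Cons e es)
  then obtain s' ss' where ss: "ss = s' # ss'" by (cases ss) auto
  obtain lab t where e: "e = (lab, t)" by fastforce
  have "concrete_run S0 tau hA l h s' es ss'"
    using Cons.prems(2,3)[of "Suc _"] Cons.prems(1) by (intro Cons.IH) (auto simp: ss)
  moreover have "concrete_edge S0 tau hA l lab s s'" and "h s' = t"
    using Cons.prems(2,3)[of 0] by (auto simp: ss e)
  ultimately show ?case by (simp add: e ss concrete_run.Cons)
qed

lemma cstep_keeps_concrete_successor:
  assumes "concrete_edge S0 tau hA l lab s s'" and "h s' = t" and "s \<in> S"
    and compat_init: "h ` S0 \<subseteq> S0t"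
    and compat_trans: "\<And>\<alpha> s s'. tau \<alpha> s = Some s' \<Longrightarrow> taut (hA \<alpha>) (h s) = Some (h s')"
  shows "\<exists>S'. cstep S0 h hA tau l S0t taut lt ((t0, (lab, t) # p), S) ((t, p), S') \<and> s' \<in> S'"
proof (cases lab)
  case (Temp a)
  then have "tstep h hA tau ((t0, (lab, t) # p), S) ((t, p), (\<Union>\<alpha> \<in> hA -` {a}. Theta tau \<alpha> S) \<inter> h -` {t})"
    by (simp add: tstep.intros)
  moreover have "s' \<in> (\<Union>\<alpha> \<in> hA -` {a}. Theta tau \<alpha> S) \<inter> h -` {t}"
    using assms(1-3) Temp by (auto simp: Theta_def)
  ultimately show ?thesis unfolding cstep_def by blast
next
  case (Epi ag)
  have "l ag s = l ag s'" and "s' \<in> reachable S0 tau"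
    using assms(1) Epi by simp_all
  have "estep S0 h hA tau l S0t taut lt ((t0, (lab, t) # p), S)
      ((t, p), {x \<in> epi_target S0 h hA tau S0t taut lt t. l ag x \<in> Lset l ag S})"
    using Epi by (simp add: estep.intros)
  moreover have "s' \<in> epi_target S0 h hA tau S0t taut lt t"
    using reachable_in_epi_target[where h=h and hA=hA and taut=taut,
        OF \<open>s' \<in> reachable S0 tau\<close> compat_init compat_trans] assms(2)
    by simp
  moreover have "l ag s' \<in> Lset l ag S"
    unfolding Lset_def using \<open>l ag s = l ag s'\<close> \<open>s \<in> S\<close> by (metis rev_image_eqI)
  ultimately show ?thesis unfolding cstep_def by blast
qed

lemma cstar_tracks_concrete_run:
  assumes "concrete_run S0 tau hA l h s es ss" and "s \<in> S"
    and compat_init: "h ` S0 \<subseteq> S0t"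
    and compat_trans: "\<And>\<alpha> s s'. tau \<alpha> s = Some s' \<Longrightarrow> taut (hA \<alpha>) (h s) = Some (h s')"
  shows "\<exists>Sn. cstar S0 h hA tau l S0t taut lt ((t, es), S) ((last (path_states (t, es)), []), Sn)
           \<and> last (s # ss) \<in> Sn"
  using assms(1,2)
proof (induction arbitrary: t S rule: concrete_run.induct)
  case (Nil s)
  then show ?case by (auto simp: path_states_def)
next
  case (Cons lab s s' t' es ss)
  obtain S' where step: "cstep S0 h hA tau l S0t taut lt ((t, (lab, t') # es), S) ((t', es), S')"
    and "s' \<in> S'"
    using cstep_keeps_concrete_successor[where taut=taut and lt=lt,
        OF Cons.hyps(1,2) Cons.prems compat_init compat_trans]
    by blast
  then obtain Sn
    where run: "cstar S0 h hA tau l S0t taut lt ((t', es), S') ((last (path_states (t', es)), []), Sn)"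
    and "last (s' # ss) \<in> Sn"
    using Cons.IH by blast
  have "cstar S0 h hA tau l S0t taut lt ((t, (lab, t') # es), S) ((last (path_states (t', es)), []), Sn)"
    using step run by (rule converse_rtranclp_into_rtranclp)
  moreover have "last (path_states (t, (lab, t') # es)) = last (path_states (t', es))"
    by (simp add: path_states_def)
  ultimately show ?case
    using \<open>last (s' # ss) \<in> Sn\<close> by (intro exI[of _ Sn]) simp
qed

theorem proposition5:
  fixes S0 :: "'s set" and tau :: "'act \<Rightarrow> 's \<Rightarrow> 's option" and l :: "'ag \<Rightarrow> 's \<Rightarrow> 'l"
    and S0t :: "'t set" and taut :: "'aact \<Rightarrow> 't \<Rightarrow> 't option" and lt :: "'ag \<Rightarrow> 't \<Rightarrow> 'lt"
    and h :: "'s \<Rightarrow> 't" and hA :: "'act \<Rightarrow> 'aact"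
    and st1 :: 't and es :: "(('aact, 'ag) elabel \<times> 't) list"
    and ss :: "'s list" and S1 :: "'s set"
  assumes compat_init: "h ` S0 \<subseteq> S0t"
    and compat_trans: "\<And>\<alpha> s s'. tau \<alpha> s = Some s' \<Longrightarrow> taut (hA \<alpha>) (h s) = Some (h s')"
    and path: "valid_path taut lt st1 es"
    and len: "length ss = length es + 1"
    and abs: "\<And>k. k < length ss \<Longrightarrow> h (ss ! k) = path_states (st1, es) ! k"
    and temp_edges: "\<And>k a. k < length es \<Longrightarrow> fst (es ! k) = Temp a \<Longrightarrow>
                       \<exists>\<alpha>. hA \<alpha> = a \<and> tau \<alpha> (ss ! k) = Some (ss ! (k + 1))"
    and epi_edges: "\<And>k ag. k < length es \<Longrightarrow> fst (es ! k) = Epi ag \<Longrightarrow>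
                       l ag (ss ! k) = l ag (ss ! (k + 1)) \<and> ss ! (k + 1) \<in> reachable S0 tau"
    and mem: "ss ! 0 \<in> S1"
    and sub: "S1 \<subseteq> h -` {st1}"
  shows "\<exists>Sn. cstar S0 h hA tau l S0t taut lt ((st1, es), S1)
                ((last (path_states (st1, es)), []), Sn)
            \<and> last ss \<in> Sn \<and> Sn \<noteq> {}"
proof -
  obtain s ss' where ss: "ss = s # ss'"
    using len by (cases ss) auto
  have run: "concrete_run S0 tau hA l h s es ss'"
  proof (rule concrete_run_of_nth)
    show "length ss' = length es"
      using len by (simp add: ss)
    fix k
    assume k: "k < length es"
    show "h (ss' ! k) = snd (es ! k)"
      using abs[of "Suc k"] k len by (simp add: ss path_states_def)
    show "concrete_edge S0 tau hA l (fst (es ! k)) ((s # ss') ! k) (ss' ! k)"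
      using temp_edges[OF k] epi_edges[OF k] by (cases "fst (es ! k)") (simp_all add: ss)
  qed
  have "s \<in> S1"
    using mem by (simp add: ss)
  obtain Sn
    where "cstar S0 h hA tau l S0t taut lt ((st1, es), S1) ((last (path_states (st1, es)), []), Sn)"
    and "last (s # ss') \<in> Sn"
    using cstar_tracks_concrete_run[where t=st1 and taut=taut and lt=lt,
        OF run \<open>s \<in> S1\<close> compat_init compat_trans]
    by blast
  then show ?thesis
    using ss by blast
qed

end
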